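(* Let $N$ be a nonempty finite set, for each $i\in N$ let $S_i$ be a nonempty lattice, and let $S\subset\prod_{i\in N}S_i$ be a nonempty sublattice (product order) such that every projection $S\to S_i$ is surjective. Suppose $S$ is a subcomplete sublattice of $\prod_{i\in N}S_i$. Then: (1) for every $i\in N$, $S_i$ is a complete lattice; (2) for every $i\in N$ and every $x_{-i}\in S_{-i}:=\prod_{j\ne i}S_j$, the set $S_i(x_{-i}):=\{x_i\in S_i:(x_i,x_{-i})\in S\}$ is a subcomplete sublattice of $S_i$; (3) for every $x\in S$, the set $S(x):=\left(\prod_{i\in N}S_i(x_{-i})\right)\cap S$ is a subcomplete sublattice of $S$.
   Context: A subset $T$ of a poset $P$ is a subcomplete sublattice of $P$ if for every nonempty $A\subset T$, $\sup_P A$ and $\inf_P A$ exist and belong to $T$; $P$ is a complete lattice if it is a subcomplete sublattice of itself. *)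

theory Defs
  imports "HOL-Library.FuncSet"
begin

definition poset_on :: "'a set \<Rightarrow> ('a \<Rightarrow> 'a \<Rightarrow> bool) \<Rightarrow> bool" where
  "poset_on P le \<longleftrightarrow> (\<forall>x\<in>P. le x x) \<and>
     (\<forall>x\<in>P. \<forall>y\<in>P. le x y \<and> le y x \<longrightarrow> x = y) \<and>
     (\<forall>x\<in>P. \<forall>y\<in>P. \<forall>z\<in>P. le x y \<and> le y z \<longrightarrow> le x z)"

definition is_ub :: "'a set \<Rightarrow> ('a \<Rightarrow> 'a \<Rightarrow> bool) \<Rightarrow> 'a set \<Rightarrow> 'a \<Rightarrow> bool" where
  "is_ub P le A u \<longleftrightarrow> u \<in> P \<and> (\<forall>a\<in>A. le a u)"

definition is_lb :: "'a set \<Rightarrow> ('a \<Rightarrow> 'a \<Rightarrow> bool) \<Rightarrow> 'a set \<Rightarrow> 'a \<Rightarrow> bool" where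
  "is_lb P le A u \<longleftrightarrow> u \<in> P \<and> (\<forall>a\<in>A. le u a)"

definition is_lub :: "'a set \<Rightarrow> ('a \<Rightarrow> 'a \<Rightarrow> bool) \<Rightarrow> 'a set \<Rightarrow> 'a \<Rightarrow> bool" where
  "is_lub P le A s \<longleftrightarrow> is_ub P le A s \<and> (\<forall>v. is_ub P le A v \<longrightarrow> le s v)"

definition is_glb :: "'a set \<Rightarrow> ('a \<Rightarrow> 'a \<Rightarrow> bool) \<Rightarrow> 'a set \<Rightarrow> 'a \<Rightarrow> bool" where
  "is_glb P le A s \<longleftrightarrow> is_lb P le A s \<and> (\<forall>v. is_lb P le A v \<longrightarrow> le v s)"

definition lattice_on :: "'a set \<Rightarrow> ('a \<Rightarrow> 'a \<Rightarrow> bool) \<Rightarrow> bool" where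
  "lattice_on P le \<longleftrightarrow> poset_on P le \<and>
     (\<forall>x\<in>P. \<forall>y\<in>P. (\<exists>s. is_lub P le {x, y} s) \<and> (\<exists>t. is_glb P le {x, y} t))"

definition sublattice_of :: "'a set \<Rightarrow> ('a \<Rightarrow> 'a \<Rightarrow> bool) \<Rightarrow> 'a set \<Rightarrow> bool" where
  "sublattice_of P le T \<longleftrightarrow> T \<subseteq> P \<and>
     (\<forall>x\<in>T. \<forall>y\<in>T. (\<exists>s. is_lub P le {x, y} s \<and> s \<in> T) \<and> (\<exists>t. is_glb P le {x, y} t \<and> t \<in> T))"

definition subcomplete_sublattice :: "'a set \<Rightarrow> ('a \<Rightarrow> 'a \<Rightarrow> bool) \<Rightarrow> 'a set \<Rightarrow> bool" where
  "subcomplete_sublattice P le T \<longleftrightarrow> T \<subseteq> P \<and>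
     (\<forall>A. A \<noteq> {} \<and> A \<subseteq> T \<longrightarrow>
        (\<exists>s. is_lub P le A s \<and> s \<in> T) \<and> (\<exists>t. is_glb P le A t \<and> t \<in> T))"

definition complete_lattice_on :: "'a set \<Rightarrow> ('a \<Rightarrow> 'a \<Rightarrow> bool) \<Rightarrow> bool" where
  "complete_lattice_on P le \<longleftrightarrow> poset_on P le \<and> subcomplete_sublattice P le P"

definition prod_le :: "'i set \<Rightarrow> ('i \<Rightarrow> 'a \<Rightarrow> 'a \<Rightarrow> bool) \<Rightarrow> ('i \<Rightarrow> 'a) \<Rightarrow> ('i \<Rightarrow> 'a) \<Rightarrow> bool" where
  "prod_le N le x y \<longleftrightarrow> (\<forall>i\<in>N. le i (x i) (y i))"

text \<open>Section S_i(x_{-i}) = {a. (a, x_{-i}) \<in> S}, where x_{-i} \<in> PiE (N - {i}) Si\<close>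
definition section_at :: "('i \<Rightarrow> 'a) set \<Rightarrow> 'i \<Rightarrow> ('i \<Rightarrow> 'a set) \<Rightarrow> ('i \<Rightarrow> 'a) \<Rightarrow> 'a set" where
  "section_at S i Si xmi = {a \<in> Si i. xmi(i := a) \<in> S}"

end

theory Submission
  imports Defs
begin

text \<open>
  Everything is inherited from the subcompleteness of \<open>S\<close> in the product, because suprema
  in a product order are computed coordinatewise. For (1), lift \<open>A \<subseteq> S\<^sub>i\<close> to the elements
  of \<open>S\<close> with \<open>i\<close>-th coordinate in \<open>A\<close>; for (2), lift \<open>A\<close> to the slice \<open>{(a, x\<^sub>-\<^sub>i) | a \<in> A}\<close>,
  whose supremum again has the coordinates \<open>x\<^sub>-\<^sub>i\<close>; for (3), the supremum of \<open>A \<subseteq> S(x)\<close>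
  has in each coordinate the supremum of a subset of \<open>S\<^sub>i(x\<^sub>-\<^sub>i)\<close>, which lies there by (2).
  Infima are the suprema for the converse orders, so only suprema need to be treated.
\<close>

definition lub_closed :: "'a set \<Rightarrow> ('a \<Rightarrow> 'a \<Rightarrow> bool) \<Rightarrow> 'a set \<Rightarrow> bool" where
  "lub_closed P le T \<longleftrightarrow> (\<forall>A. A \<noteq> {} \<and> A \<subseteq> T \<longrightarrow> (\<exists>s. is_lub P le A s \<and> s \<in> T))"

lemma lub_closedI:
  "(\<And>A. A \<noteq> {} \<Longrightarrow> A \<subseteq> T \<Longrightarrow> \<exists>s. is_lub P le A s \<and> s \<in> T) \<Longrightarrow> lub_closed P le T"
  unfolding lub_closed_def by blast

lemma lub_closedD:
  "lub_closed P le T \<Longrightarrow> A \<noteq> {} \<Longrightarrow> A \<subseteq> T \<Longrightarrow> \<exists>s. is_lub P le A s \<and> s \<in> T"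
  unfolding lub_closed_def by blast

lemma is_glb_iff_is_lub_conversep: "is_glb P le A s \<longleftrightarrow> is_lub P le\<inverse>\<inverse> A s"
  unfolding is_glb_def is_lub_def is_lb_def is_ub_def by simp

lemma poset_on_conversep: "poset_on P le\<inverse>\<inverse> \<longleftrightarrow> poset_on P le"
  unfolding poset_on_def conversep_iff by blast

lemma prod_le_conversep: "prod_le N (\<lambda>i. (le i)\<inverse>\<inverse>) = (prod_le N le)\<inverse>\<inverse>"
  unfolding prod_le_def by (intro ext) simp

lemma subcomplete_sublattice_iff_lub_closed:
  "subcomplete_sublattice P le T \<longleftrightarrow> T \<subseteq> P \<and> lub_closed P le T \<and> lub_closed P le\<inverse>\<inverse> T"
  unfolding subcomplete_sublattice_def lub_closed_def is_glb_iff_is_lub_conversep by blast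

lemma poset_on_reflD: "poset_on P le \<Longrightarrow> x \<in> P \<Longrightarrow> le x x"
  unfolding poset_on_def by blast

lemma poset_on_antisymD:
  "poset_on P le \<Longrightarrow> x \<in> P \<Longrightarrow> y \<in> P \<Longrightarrow> le x y \<Longrightarrow> le y x \<Longrightarrow> x = y"
  unfolding poset_on_def by blast

lemma is_lub_unique: "poset_on P le \<Longrightarrow> is_lub P le A s \<Longrightarrow> is_lub P le A t \<Longrightarrow> s = t"
  unfolding poset_on_def is_lub_def is_ub_def by blast

lemma is_lub_subset: "is_lub P le A s \<Longrightarrow> s \<in> S \<Longrightarrow> S \<subseteq> P \<Longrightarrow> is_lub S le A s"
  unfolding is_lub_def is_ub_def by blast

lemma is_lub_PiE_component:
  assumes "i \<in> N" and "is_lub (PiE N Si) (prod_le N le) A s"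
  shows "is_lub (Si i) (le i) ((\<lambda>y. y i) ` A) (s i)"
proof -
  have s: "s \<in> PiE N Si" and ub: "\<forall>a\<in>A. prod_le N le a s"
    and least: "\<And>v. is_ub (PiE N Si) (prod_le N le) A v \<Longrightarrow> prod_le N le s v"
    using assms(2) unfolding is_lub_def is_ub_def by auto
  have "le i (s i) v" if v: "is_ub (Si i) (le i) ((\<lambda>y. y i) ` A) v" for v
  proof -
    have "is_ub (PiE N Si) (prod_le N le) A (s(i := v))"
      using s ub v assms(1) unfolding is_ub_def prod_le_def by (auto simp: PiE_iff extensional_def)
    then show ?thesis
      using least assms(1) unfolding prod_le_def by fastforce
  qed
  then show ?thesis
    using s ub assms(1) unfolding is_lub_def is_ub_def prod_le_def by auto
qed

lemma is_lub_PiE_slice: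
  assumes pos: "\<forall>j\<in>N. poset_on (Si j) (le j)" and i: "i \<in> N"
    and xmi: "xmi \<in> PiE (N - {i}) Si" and A: "A \<noteq> {}"
    and s: "is_lub (PiE N Si) (prod_le N le) ((\<lambda>a. xmi(i := a)) ` A) s"
  shows "s = xmi(i := s i)"
proof
  fix j
  have sP: "s \<in> PiE N Si" and ub: "\<forall>a\<in>A. prod_le N le (xmi(i := a)) s"
    and least: "\<And>v. is_ub (PiE N Si) (prod_le N le) ((\<lambda>a. xmi(i := a)) ` A) v
                  \<Longrightarrow> prod_le N le s v"
    using s unfolding is_lub_def is_ub_def by auto
  obtain a where "a \<in> A" using A by auto
  then have above: "prod_le N le (xmi(i := a)) s" using ub by blast
  have "is_ub (PiE N Si) (prod_le N le) ((\<lambda>a. xmi(i := a)) ` A) (xmi(i := s i))"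
    unfolding is_ub_def prod_le_def
  proof (intro conjI ballI)
    show "xmi(i := s i) \<in> PiE N Si"
      using xmi sP i by (auto simp: PiE_iff extensional_def)
  next
    fix y k assume y: "y \<in> (\<lambda>a. xmi(i := a)) ` A" and k: "k \<in> N"
    show "le k (y k) ((xmi(i := s i)) k)"
    proof (cases "k = i")
      case True
      from y obtain b where "b \<in> A" "y = xmi(i := b)" by blast
      then show ?thesis using ub i True unfolding prod_le_def by (metis fun_upd_same)
    next
      case False
      then have "xmi k \<in> Si k" using xmi k by (auto simp: PiE_iff)
      then have "le k (xmi k) (xmi k)" using pos k by (blast intro: poset_on_reflD)
      then show ?thesis using y False by auto
    qed
  qed
  then have below: "prod_le N le s (xmi(i := s i))" using least by blast
  show "s j = (xmi(i := s i)) j"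
  proof (cases "j \<in> N - {i}")
    case True
    have "s j = xmi j"
    proof (rule poset_on_antisymD)
      show "poset_on (Si j) (le j)" "s j \<in> Si j" "xmi j \<in> Si j"
        using pos sP xmi True by (auto simp: PiE_iff)
      show "le j (s j) (xmi j)" "le j (xmi j) (s j)"
        using above below True unfolding prod_le_def by auto
    qed
    then show ?thesis using True by simp
  next
    case False
    then show ?thesis
      using PiE_arb[OF sP, of j] PiE_arb[OF xmi, of j] i by (cases "j = i") auto
  qed
qed

lemma lub_closed_projection:
  assumes i: "i \<in> N" and S: "lub_closed (PiE N Si) (prod_le N le) S"
    and onto: "(\<lambda>x. x i) ` S = Si i"
  shows "lub_closed (Si i) (le i) (Si i)"
proof (rule lub_closedI)
  fix A assume A: "A \<noteq> {}" "A \<subseteq> Si i"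
  define B where "B = {y \<in> S. y i \<in> A}"
  have BA: "(\<lambda>y. y i) ` B = A"
  proof
    show "(\<lambda>y. y i) ` B \<subseteq> A" unfolding B_def by blast
    show "A \<subseteq> (\<lambda>y. y i) ` B"
    proof
      fix a assume a: "a \<in> A"
      then obtain y where "y \<in> S" "a = y i" using A onto by blast
      then show "a \<in> (\<lambda>y. y i) ` B" using a unfolding B_def by blast
    qed
  qed
  then have "B \<noteq> {}" using A by blast
  moreover have "B \<subseteq> S" unfolding B_def by blast
  ultimately obtain s where "is_lub (PiE N Si) (prod_le N le) B s"
    using lub_closedD[OF S] by blast
  then have "is_lub (Si i) (le i) A (s i)"
    using is_lub_PiE_component[OF i] BA by blast
  then show "\<exists>s. is_lub (Si i) (le i) A s \<and> s \<in> Si i"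
    unfolding is_lub_def is_ub_def by blast
qed

lemma lub_closed_section:
  assumes pos: "\<forall>j\<in>N. poset_on (Si j) (le j)" and i: "i \<in> N"
    and xmi: "xmi \<in> PiE (N - {i}) Si"
    and S: "S \<subseteq> PiE N Si" "lub_closed (PiE N Si) (prod_le N le) S"
  shows "lub_closed (Si i) (le i) (section_at S i Si xmi)"
proof (rule lub_closedI)
  fix A assume A: "A \<noteq> {}" "A \<subseteq> section_at S i Si xmi"
  define B where "B = (\<lambda>a. xmi(i := a)) ` A"
  have BA: "(\<lambda>y. y i) ` B = A" unfolding B_def by (simp add: image_image)
  have "B \<noteq> {}" "B \<subseteq> S" using A unfolding B_def section_at_def by auto
  then obtain s where s: "is_lub (PiE N Si) (prod_le N le) B s" "s \<in> S"
    using lub_closedD[OF S(2)] by blast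
  have "s = xmi(i := s i)"
    using is_lub_PiE_slice[OF pos i xmi] s(1) A unfolding B_def by blast
  then have "s i \<in> section_at S i Si xmi"
    using s(2) S(1) i unfolding section_at_def by (auto simp: PiE_iff)
  moreover have "is_lub (Si i) (le i) A (s i)"
    using is_lub_PiE_component[OF i s(1)] BA by simp
  ultimately show "\<exists>s. is_lub (Si i) (le i) A s \<and> s \<in> section_at S i Si xmi" by blast
qed

lemma lub_closed_PiE_inter:
  assumes pos: "\<forall>i\<in>N. poset_on (Si i) (le i)"
    and S: "S \<subseteq> PiE N Si" "lub_closed (PiE N Si) (prod_le N le) S"
    and C: "\<forall>i\<in>N. lub_closed (Si i) (le i) (C i)"
  shows "lub_closed S (prod_le N le) ({y \<in> PiE N Si. \<forall>i\<in>N. y i \<in> C i} \<inter> S)"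
proof (rule lub_closedI)
  let ?T = "{y \<in> PiE N Si. \<forall>i\<in>N. y i \<in> C i} \<inter> S"
  fix A assume A: "A \<noteq> {}" "A \<subseteq> ?T"
  obtain s where s: "is_lub (PiE N Si) (prod_le N le) A s" "s \<in> S"
    using lub_closedD[OF S(2) A(1)] A(2) by blast
  have "s i \<in> C i" if i: "i \<in> N" for i
  proof -
    have "(\<lambda>y. y i) ` A \<noteq> {}" "(\<lambda>y. y i) ` A \<subseteq> C i" using A i by auto
    then obtain c where "is_lub (Si i) (le i) ((\<lambda>y. y i) ` A) c" "c \<in> C i"
      using lub_closedD[OF C[rule_format, OF i]] by meson
    moreover have "is_lub (Si i) (le i) ((\<lambda>y. y i) ` A) (s i)"
      using is_lub_PiE_component[OF i s(1)] .
    ultimately show ?thesis using is_lub_unique pos i by metis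
  qed
  then have "s \<in> ?T" using s S(1) by blast
  moreover have "is_lub S (prod_le N le) A s" using is_lub_subset s S(1) .
  ultimately show "\<exists>s. is_lub S (prod_le N le) A s \<and> s \<in> ?T" by blast
qed

theorem lemma5p2:
  fixes N :: "'i set" and Si :: "'i \<Rightarrow> 'a set" and le :: "'i \<Rightarrow> 'a \<Rightarrow> 'a \<Rightarrow> bool"
    and S :: "('i \<Rightarrow> 'a) set"
  assumes "finite N" and "N \<noteq> {}"
    and "\<forall>i\<in>N. Si i \<noteq> {} \<and> lattice_on (Si i) (le i)"
    and "S \<noteq> {}"
    and "sublattice_of (PiE N Si) (prod_le N le) S"
    and "\<forall>i\<in>N. (\<lambda>x. x i) ` S = Si i"
    and "subcomplete_sublattice (PiE N Si) (prod_le N le) S"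
  shows "(\<forall>i\<in>N. complete_lattice_on (Si i) (le i))
    \<and> (\<forall>i\<in>N. \<forall>xmi\<in>PiE (N - {i}) Si.
          subcomplete_sublattice (Si i) (le i) (section_at S i Si xmi))
    \<and> (\<forall>x\<in>S. subcomplete_sublattice S (prod_le N le)
          ({y \<in> PiE N Si. \<forall>i\<in>N. y i \<in> section_at S i Si (restrict x (N - {i}))} \<inter> S))"
proof -
  have pos: "\<forall>i\<in>N. poset_on (Si i) (le i)"
    using assms(3) unfolding lattice_on_def by blast
  then have pos_conv: "\<forall>i\<in>N. poset_on (Si i) (le i)\<inverse>\<inverse>"
    by (simp add: poset_on_conversep)
  have S: "S \<subseteq> PiE N Si" "lub_closed (PiE N Si) (prod_le N le) S"
    "lub_closed (PiE N Si) (prod_le N (\<lambda>i. (le i)\<inverse>\<inverse>)) S"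
    using assms(7) by (simp_all add: subcomplete_sublattice_iff_lub_closed prod_le_conversep)
  have components: "complete_lattice_on (Si i) (le i)" if "i \<in> N" for i
    using lub_closed_projection[OF that S(2) assms(6)[rule_format, OF that]]
      lub_closed_projection[OF that S(3) assms(6)[rule_format, OF that]] pos that
    by (simp add: complete_lattice_on_def subcomplete_sublattice_iff_lub_closed)
  have sections: "subcomplete_sublattice (Si i) (le i) (section_at S i Si xmi)"
    if "i \<in> N" "xmi \<in> PiE (N - {i}) Si" for i xmi
    using lub_closed_section[OF pos that S(1,2)] lub_closed_section[OF pos_conv that S(1,3)]
    by (simp add: subcomplete_sublattice_iff_lub_closed section_at_def)
  have "subcomplete_sublattice S (prod_le N le)
          ({y \<in> PiE N Si. \<forall>i\<in>N. y i \<in> section_at S i Si (restrict x (N - {i}))} \<inter> S)"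
    if "x \<in> S" for x
  proof -
    have "\<forall>i\<in>N. subcomplete_sublattice (Si i) (le i) (section_at S i Si (restrict x (N - {i})))"
      using sections S(1) that by (auto simp: PiE_iff)
    then show ?thesis
      using lub_closed_PiE_inter[OF pos S(1,2)] lub_closed_PiE_inter[OF pos_conv S(1,3)]
      by (simp add: subcomplete_sublattice_iff_lub_closed prod_le_conversep)
  qed
  with components sections show ?thesis by blast
qed

end
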